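(* Let $(X,d,f)$ be a dynamical system and $\mathcal{A}=\{\mathcal{U}_n\}_{n\in\mathbb{N}}$ a tame defining sequence of $(X,d)$, and assume that for some $n$ the partition $\mathcal{U}_n$ consists of compact sets. Then if $f$ is uniformly continuous, $f$ has the shadowing property if and only if it has the finite shadowing property.
   Context: Spaces are nonempty separable metrizable; $d$ admissible, $f$ continuous. A partition is a cover by pairwise disjoint nonempty clopen sets. A defining sequence is a sequence of partitions $\{\mathcal{U}_n\}$, each refining the previous, whose union is a basis; tame if $\sup\{\operatorname{diam}O:O\in\mathcal{U}_n\}\to0$ and each $\mathcal{U}_n$ is $\rho_n$-separated for some $\rho_n>0$ (points in distinct elements are at distance $\ge\rho_n$). A $\delta$-pseudo-orbit is a finite or infinite sequence $(x_i)$ with $d(f(x_i),x_{i+1})<\delta$; $x$ $\varepsilon$-shadows it if $d(f^i(x),x_i)<\varepsilon$ for all indices. Finite shadowing: $\forall\varepsilon>0\,\exists\delta>0$ every finite $\delta$-pseudo-orbit is $\varepsilon$-shadowed; shadowing: same for infinite pseudo-orbits. *)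

theory Defs
  imports "HOL-Analysis.Analysis"
begin

definition separable_set :: "'a::metric_space set \<Rightarrow> bool" where
  "separable_set X \<longleftrightarrow> (\<exists>D. countable D \<and> D \<subseteq> X \<and> X \<subseteq> closure D)"

definition dyn_system :: "'a::metric_space set \<Rightarrow> ('a \<Rightarrow> 'a) \<Rightarrow> bool" where
  "dyn_system X f \<longleftrightarrow> X \<noteq> {} \<and> separable_set X \<and> f ` X \<subseteq> X \<and> continuous_on X f"

definition is_partition :: "'a::metric_space set \<Rightarrow> 'a set set \<Rightarrow> bool" where
  "is_partition X P \<longleftrightarrow> \<Union>P = X \<and>
     (\<forall>B\<in>P. B \<noteq> {} \<and> openin (top_of_set X) B \<and> closedin (top_of_set X) B) \<and>
     (\<forall>B\<in>P. \<forall>B'\<in>P. B \<noteq> B' \<longrightarrow> B \<inter> B' = {})"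

definition refines :: "'a set set \<Rightarrow> 'a set set \<Rightarrow> bool" where
  "refines P Q \<longleftrightarrow> (\<forall>B\<in>P. \<exists>B'\<in>Q. B \<subseteq> B')"

definition defining_sequence :: "'a::metric_space set \<Rightarrow> (nat \<Rightarrow> 'a set set) \<Rightarrow> bool" where
  "defining_sequence X U \<longleftrightarrow> (\<forall>n. is_partition X (U n)) \<and> (\<forall>n. refines (U (Suc n)) (U n)) \<and>
     (\<forall>V x. openin (top_of_set X) V \<longrightarrow> x \<in> V \<longrightarrow> (\<exists>n. \<exists>B\<in>U n. x \<in> B \<and> B \<subseteq> V))"

definition separated_by :: "real \<Rightarrow> 'a::metric_space set set \<Rightarrow> bool" where
  "separated_by \<rho> P \<longleftrightarrow> (\<forall>B\<in>P. \<forall>B'\<in>P. B \<noteq> B' \<longrightarrow> (\<forall>x\<in>B. \<forall>y\<in>B'. dist x y \<ge> \<rho>))"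

text \<open>Tame: sup of diameters tends to 0 (written out: eventually all elements are bounded
with diameter at most any given epsilon), and each partition is rho_n-separated.\<close>
definition tame_defining_sequence :: "'a::metric_space set \<Rightarrow> (nat \<Rightarrow> 'a set set) \<Rightarrow> bool" where
  "tame_defining_sequence X U \<longleftrightarrow> defining_sequence X U \<and>
     (\<forall>\<epsilon>>0. \<exists>N. \<forall>n\<ge>N. \<forall>B\<in>U n. bounded B \<and> diameter B \<le> \<epsilon>) \<and>
     (\<forall>n. \<exists>\<rho>>0. separated_by \<rho> (U n))"

definition finite_pseudo_orbit :: "'a::metric_space set \<Rightarrow> ('a \<Rightarrow> 'a) \<Rightarrow> real \<Rightarrow> nat \<Rightarrow> (nat \<Rightarrow> 'a) \<Rightarrow> bool" where
  "finite_pseudo_orbit X f \<delta> k x \<longleftrightarrow> (\<forall>i\<le>k. x i \<in> X) \<and> (\<forall>i<k. dist (f (x i)) (x (Suc i)) < \<delta>)"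

definition pseudo_orbit :: "'a::metric_space set \<Rightarrow> ('a \<Rightarrow> 'a) \<Rightarrow> real \<Rightarrow> (nat \<Rightarrow> 'a) \<Rightarrow> bool" where
  "pseudo_orbit X f \<delta> x \<longleftrightarrow> (\<forall>i. x i \<in> X) \<and> (\<forall>i. dist (f (x i)) (x (Suc i)) < \<delta>)"

definition finite_shadowing :: "'a::metric_space set \<Rightarrow> ('a \<Rightarrow> 'a) \<Rightarrow> bool" where
  "finite_shadowing X f \<longleftrightarrow> (\<forall>\<epsilon>>0. \<exists>\<delta>>0. \<forall>k x. finite_pseudo_orbit X f \<delta> k x \<longrightarrow>
      (\<exists>z\<in>X. \<forall>i\<le>k. dist ((f ^^ i) z) (x i) < \<epsilon>))"

definition shadowing :: "'a::metric_space set \<Rightarrow> ('a \<Rightarrow> 'a) \<Rightarrow> bool" where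
  "shadowing X f \<longleftrightarrow> (\<forall>\<epsilon>>0. \<exists>\<delta>>0. \<forall>x. pseudo_orbit X f \<delta> x \<longrightarrow>
      (\<exists>z\<in>X. \<forall>i. dist ((f ^^ i) z) (x i) < \<epsilon>))"

end

theory Submission
  imports Defs
begin

text \<open>Shadowing trivially gives finite shadowing: a finite pseudo-orbit is continued by a true
orbit. Conversely, given an infinite \<delta>-pseudo-orbit, finite shadowing yields for each \<open>k\<close> a
point \<open>z\<^sub>k\<close> shadowing its first \<open>k + 1\<close> terms within \<open>e < \<rho>\<close>. All \<open>z\<^sub>k\<close> are then \<open>\<rho>\<close>-close to
the initial point, so they lie in its block of the \<open>\<rho>\<close>-separated partition into compact sets.
A cluster point of \<open>(z\<^sub>k)\<close> in that block shadows the whole pseudo-orbit within \<open>e\<close>, by continuity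
of the iterates of \<open>f\<close>.\<close>

lemma funpow_mem:
  assumes "f ` X \<subseteq> X" "x \<in> X"
  shows "(f ^^ n) x \<in> X"
  using assms by (induction n) auto

lemma continuous_on_funpow:
  assumes "f ` X \<subseteq> X" "continuous_on X f"
  shows "continuous_on X (f ^^ n)"
proof (induction n)
  case 0
  then show ?case by (simp add: continuous_on_id)
next
  case (Suc n)
  have "(f ^^ n) ` X \<subseteq> X"
    using funpow_mem[OF assms(1)] by blast
  then have "continuous_on X (f \<circ> (f ^^ n))"
    using continuous_on_compose[OF Suc] continuous_on_subset[OF assms(2)] by blast
  then show ?case by simp
qed

lemma shadowing_imp_finite_shadowing:
  assumes fX: "f ` X \<subseteq> X" and sh: "shadowing X f"
  shows "finite_shadowing X f"
  unfolding finite_shadowing_def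
proof (intro allI impI)
  fix \<epsilon> :: real
  assume "\<epsilon> > 0"
  then obtain \<delta> where "\<delta> > 0"
    and \<delta>: "\<And>x. pseudo_orbit X f \<delta> x \<Longrightarrow> \<exists>z\<in>X. \<forall>i. dist ((f ^^ i) z) (x i) < \<epsilon>"
    using sh unfolding shadowing_def by blast
  have "\<exists>z\<in>X. \<forall>i\<le>k. dist ((f ^^ i) z) (x i) < \<epsilon>" if po: "finite_pseudo_orbit X f \<delta> k x" for k x
  proof -
    define y where "y i = (if i \<le> k then x i else (f ^^ (i - k)) (x k))" for i
    have "x k \<in> X"
      using po unfolding finite_pseudo_orbit_def by simp
    then have "y i \<in> X" for i
      using po funpow_mem[OF fX] unfolding y_def finite_pseudo_orbit_def by auto
    moreover have "dist (f (y i)) (y (Suc i)) < \<delta>" for i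
    proof (cases "i < k")
      case True
      then show ?thesis using po unfolding y_def finite_pseudo_orbit_def by auto
    next
      case False
      then have "y (Suc i) = f (y i)"
        by (auto simp: y_def Suc_diff_le)
      then show ?thesis using \<open>\<delta> > 0\<close> by simp
    qed
    ultimately obtain z where "z \<in> X" "\<forall>i. dist ((f ^^ i) z) (y i) < \<epsilon>"
      using \<delta> unfolding pseudo_orbit_def by blast
    then show ?thesis
      unfolding y_def by metis
  qed
  with \<open>\<delta> > 0\<close> show "\<exists>\<delta>>0. \<forall>k x. finite_pseudo_orbit X f \<delta> k x \<longrightarrow>
      (\<exists>z\<in>X. \<forall>i\<le>k. dist ((f ^^ i) z) (x i) < \<epsilon>)"
    by blast
qed

lemma separated_partition_block_contains_close_points:
  assumes "is_partition X P" "separated_by \<rho> P"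
    and "B \<in> P" "x \<in> B" "y \<in> X" "dist x y < \<rho>"
  shows "y \<in> B"
proof -
  obtain B' where "B' \<in> P" "y \<in> B'"
    using assms(1,5) unfolding is_partition_def by blast
  with assms have "B' = B"
    unfolding separated_by_def by force
  with \<open>y \<in> B'\<close> show ?thesis by simp
qed

lemma cluster_point_shadows:
  assumes fX: "f ` X \<subseteq> X" and fc: "continuous_on X f"
    and K: "compact K" "K \<subseteq> X" and zK: "\<And>k. z k \<in> K"
    and z: "\<forall>k. \<forall>i\<le>k. dist ((f ^^ i) (z k)) (x i) < e"
  obtains l where "l \<in> K" "\<And>i. dist ((f ^^ i) l) (x i) \<le> e"
proof -
  obtain l r where "l \<in> K" "strict_mono r" and lim: "(z \<circ> r) \<longlonglongrightarrow> l"
    using compact_imp_seq_compact[OF K(1)] zK unfolding seq_compact_def by metis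
  have zX: "z (r j) \<in> X" for j
    using zK K(2) by auto
  have "dist ((f ^^ i) l) (x i) \<le> e" for i
  proof (rule tendsto_upperbound)
    have "(\<lambda>j. (f ^^ i) ((z \<circ> r) j)) \<longlonglongrightarrow> (f ^^ i) l"
      using \<open>l \<in> K\<close> K(2)
      by (intro continuous_on_tendsto_compose[OF continuous_on_funpow[OF fX fc] lim])
        (auto simp: zX)
    then show "(\<lambda>j. dist ((f ^^ i) ((z \<circ> r) j)) (x i)) \<longlonglongrightarrow> dist ((f ^^ i) l) (x i)"
      by (intro tendsto_dist tendsto_const)
    have "dist ((f ^^ i) ((z \<circ> r) j)) (x i) \<le> e" if "i \<le> j" for j
    proof -
      have "i \<le> r j"
        using seq_suble[OF \<open>strict_mono r\<close>, of j] that by linarith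
      from z[rule_format, OF this] show ?thesis
        by simp
    qed
    then show "\<forall>\<^sub>F j in sequentially. dist ((f ^^ i) ((z \<circ> r) j)) (x i) \<le> e"
      unfolding eventually_sequentially by blast
  qed simp
  with \<open>l \<in> K\<close> show thesis by (rule that)
qed

lemma finite_shadowing_imp_shadowing:
  assumes fX: "f ` X \<subseteq> X" and fc: "continuous_on X f" and fs: "finite_shadowing X f"
    and P: "is_partition X P" "separated_by \<rho> P" "\<rho> > 0" and compact: "\<forall>B\<in>P. compact B"
  shows "shadowing X f"
  unfolding shadowing_def
proof (intro allI impI)
  fix \<epsilon> :: real
  assume "\<epsilon> > 0"
  define e where "e = min (\<epsilon> / 2) \<rho>"
  have "e > 0" "e < \<epsilon>" "e \<le> \<rho>"
    using \<open>\<epsilon> > 0\<close> \<open>\<rho> > 0\<close> unfolding e_def by auto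
  obtain \<delta> where "\<delta> > 0" and \<delta>: "\<forall>k x. finite_pseudo_orbit X f \<delta> k x \<longrightarrow>
      (\<exists>z\<in>X. \<forall>i\<le>k. dist ((f ^^ i) z) (x i) < e)"
    using fs[unfolded finite_shadowing_def, rule_format, OF \<open>e > 0\<close>] by blast
  have "\<exists>l\<in>X. \<forall>i. dist ((f ^^ i) l) (x i) < \<epsilon>" if po: "pseudo_orbit X f \<delta> x" for x
  proof -
    have "finite_pseudo_orbit X f \<delta> k x" for k
      using po unfolding pseudo_orbit_def finite_pseudo_orbit_def by simp
    then have "\<forall>k. \<exists>z\<in>X. \<forall>i\<le>k. dist ((f ^^ i) z) (x i) < e"
      using \<delta> by simp
    then obtain z where zX: "\<And>k. z k \<in> X"
      and z: "\<forall>k. \<forall>i\<le>k. dist ((f ^^ i) (z k)) (x i) < e"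
      by metis
    have "x 0 \<in> X"
      using po unfolding pseudo_orbit_def by simp
    then obtain B where B: "B \<in> P" "x 0 \<in> B"
      using P(1) unfolding is_partition_def by blast
    have zB: "z k \<in> B" for k
      using separated_partition_block_contains_close_points[OF P(1,2) B zX]
        z[rule_format, OF le0[of k]] \<open>e \<le> \<rho>\<close> by (simp add: dist_commute)
    have "B \<subseteq> X"
      using B P(1) unfolding is_partition_def by blast
    obtain l where "l \<in> B" and l: "\<And>i. dist ((f ^^ i) l) (x i) \<le> e"
      using cluster_point_shadows[OF fX fc _ \<open>B \<subseteq> X\<close> zB z] compact B(1) by blast
    have "dist ((f ^^ i) l) (x i) < \<epsilon>" for i
      using l[of i] \<open>e < \<epsilon>\<close> by linarith
    with \<open>l \<in> B\<close> \<open>B \<subseteq> X\<close> show ?thesis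
      by blast
  qed
  with \<open>\<delta> > 0\<close> show "\<exists>\<delta>>0. \<forall>x. pseudo_orbit X f \<delta> x \<longrightarrow> (\<exists>z\<in>X. \<forall>i. dist ((f ^^ i) z) (x i) < \<epsilon>)"
    by blast
qed

theorem proposition4p19:
  fixes X :: "'a::metric_space set" and f :: "'a \<Rightarrow> 'a" and U :: "nat \<Rightarrow> 'a set set"
  assumes "dyn_system X f"
    and "tame_defining_sequence X U"
    and "\<exists>n. \<forall>B\<in>U n. compact B"
    and "uniformly_continuous_on X f"
  shows "shadowing X f \<longleftrightarrow> finite_shadowing X f"
proof -
  have fX: "f ` X \<subseteq> X" and fc: "continuous_on X f"
    using assms(1) unfolding dyn_system_def by auto
  obtain n where compact: "\<forall>B\<in>U n. compact B"
    using assms(3) by blast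
  have partition: "is_partition X (U n)"
    using assms(2) unfolding tame_defining_sequence_def defining_sequence_def by blast
  obtain \<rho> where "\<rho> > 0" "separated_by \<rho> (U n)"
    using assms(2) unfolding tame_defining_sequence_def by blast
  then show ?thesis
    using shadowing_imp_finite_shadowing[OF fX]
      finite_shadowing_imp_shadowing[OF fX fc _ partition _ _ compact] by blast
qed

end
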